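(* Let $k,\ell,n$ be integers with $2\le\ell<k/2$, $n\ge1$, and let $G_1$, $U_i$, $H_1=H_1^1\cup H_1^2$, $H_2$, $tr_1$ and $\min$ be as in the context. Let $s\ge1$ and let $P=(e,e_1,\dots,e_s,e')$ be an $(\ell,k)$-path (edges listed in order) with $e,e'\in H_1$ and $e_1,\dots,e_s\in H_2$. Then (i) $\min(e_1)=\dots=\min(e_s)\in tr_1(e)\cap tr_1(e')$; (ii) at most one of $e,e'$ belongs to $H_1^2$.
   Context: Let $G_1$ be a graph on vertex set $[n]=\{1,\dots,n\}$. Let $\{A_i,B_i: i=1,\dots,2n\}$ be $4n$ pairwise disjoint finite sets with $|A_i|=2\lfloor k/2\rfloor+\ell$ for $1\le i\le n$ and $|A_i|=2k-2\ell-3$ for $n+1\le i\le 2n$; put $U_i=A_i\cup B_i$ and $V=\bigcup_{i=1}^{2n}U_i$. For $S\subseteq V$ let $tr(S)=\{i:S\cap U_i\ne\emptyset\}$, $tr_1(S)=tr(S)\cap[n]$, $\min(S)=\min tr(S)$. Define $H_1^1$ as the set of $k$-subsets $e\subseteq V$ such that for some edge $\{i,j\}$ of $G_1$, $tr_1(e)=\{i,j\}$, $|A_i\cap e|\ge\lfloor k/2\rfloor$ and $|A_j\cap e|\ge\lfloor k/2\rfloor$. Define $H_1^2$ as the set of $k$-subsets $e\subseteq V$ such that for some $i\in[n]$, $tr(e)=\{i,n+i\}$, $|A_i\cap e|=\ell+1$ and $|A_{n+i}\cap e|=k-\ell-1$. Let $H_1=H_1^1\cup H_1^2$, and let $H_2$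 be the set of $k$-subsets $e\subseteq V$ with $|e\cap U_{\min(e)}|\ge k-\ell+1$. An $(\ell,k)$-path is a $k$-graph with distinct vertices $v_1,\dots,v_s$, $s\equiv\ell\pmod{k-\ell}$, $s\ge k$, and edges $\{v_{i(k-\ell)+1},\dots,v_{i(k-\ell)+k}\}$, $i=0,\dots,(s-k)/(k-\ell)$. *)

theory Defs
  imports Main
begin

definition U :: "(nat \<Rightarrow> 'a set) \<Rightarrow> (nat \<Rightarrow> 'a set) \<Rightarrow> nat \<Rightarrow> 'a set" where
  "U A B i = A i \<union> B i"

definition Vset :: "nat \<Rightarrow> (nat \<Rightarrow> 'a set) \<Rightarrow> (nat \<Rightarrow> 'a set) \<Rightarrow> 'a set" where
  "Vset n A B = (\<Union>i\<in>{1..2*n}. U A B i)"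

definition tr :: "nat \<Rightarrow> (nat \<Rightarrow> 'a set) \<Rightarrow> (nat \<Rightarrow> 'a set) \<Rightarrow> 'a set \<Rightarrow> nat set" where
  "tr n A B S = {i\<in>{1..2*n}. S \<inter> U A B i \<noteq> {}}"

definition tr1 :: "nat \<Rightarrow> (nat \<Rightarrow> 'a set) \<Rightarrow> (nat \<Rightarrow> 'a set) \<Rightarrow> 'a set \<Rightarrow> nat set" where
  "tr1 n A B S = tr n A B S \<inter> {1..n}"

definition minidx :: "nat \<Rightarrow> (nat \<Rightarrow> 'a set) \<Rightarrow> (nat \<Rightarrow> 'a set) \<Rightarrow> 'a set \<Rightarrow> nat" where
  "minidx n A B S = Min (tr n A B S)"

definition H11 :: "nat \<Rightarrow> nat \<Rightarrow> nat set set \<Rightarrow> (nat \<Rightarrow> 'a set) \<Rightarrow> (nat \<Rightarrow> 'a set) \<Rightarrow> 'a set set" where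
  "H11 k n G A B = {e. e \<subseteq> Vset n A B \<and> card e = k \<and>
     (\<exists>i j. {i, j} \<in> G \<and> tr1 n A B e = {i, j} \<and>
            k div 2 \<le> card (A i \<inter> e) \<and> k div 2 \<le> card (A j \<inter> e))}"

definition H12 :: "nat \<Rightarrow> nat \<Rightarrow> nat \<Rightarrow> (nat \<Rightarrow> 'a set) \<Rightarrow> (nat \<Rightarrow> 'a set) \<Rightarrow> 'a set set" where
  "H12 k l n A B = {e. e \<subseteq> Vset n A B \<and> card e = k \<and>
     (\<exists>i\<in>{1..n}. tr n A B e = {i, n + i} \<and>
            card (A i \<inter> e) = l + 1 \<and> card (A (n + i) \<inter> e) = k - l - 1)}"

definition H1 :: "nat \<Rightarrow> nat \<Rightarrow> nat \<Rightarrow> nat set set \<Rightarrow> (nat \<Rightarrow> 'a set) \<Rightarrow> (nat \<Rightarrow> 'a set) \<Rightarrow> 'a set set" where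
  "H1 k l n G A B = H11 k n G A B \<union> H12 k l n A B"

definition H2 :: "nat \<Rightarrow> nat \<Rightarrow> nat \<Rightarrow> (nat \<Rightarrow> 'a set) \<Rightarrow> (nat \<Rightarrow> 'a set) \<Rightarrow> 'a set set" where
  "H2 k l n A B = {e. e \<subseteq> Vset n A B \<and> card e = k \<and>
     k - l + 1 \<le> card (e \<inter> U A B (minidx n A B e))}"

text \<open>An (l,k)-path on the distinct vertex list vs = [v_1,...,v_m]: its j-th edge
  (0-indexed) is {v_(j(k-l)+1), ..., v_(j(k-l)+k)}.\<close>

definition path_edge :: "nat \<Rightarrow> nat \<Rightarrow> 'a list \<Rightarrow> nat \<Rightarrow> 'a set" where
  "path_edge k l vs j = set (take k (drop (j * (k - l)) vs))"

end

theory Submission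
  imports Defs
begin

text \<open>Consecutive edges of an (l,k)-path share l vertices. An edge of H2 has fewer than l
  vertices outside the part of its smallest index, so l shared vertices force that part into
  the trace of the neighbouring edge; hence all middle edges have the same smallest index m,
  and m lies in the traces of the two end edges. An end edge in H11 has at most one vertex
  outside its two A-parts, so the l \<ge> 2 shared vertices meet one of them and m \<le> n.
  Two disjoint H12 edges with a common index would put 2(k - l - 1) vertices into a part of
  size 2k - 2l - 3; so the end edges, which are disjoint as the path has s \<ge> 1 middle edges,
  cannot both lie in H12, and one of them is in H11.\<close>

lemma set_take_drop_disjoint:
  assumes "distinct xs" "a + k \<le> b"
  shows "set (take k (drop a xs)) \<inter> set (take m (drop b xs)) = {}"
proof -
  have "set (take k (drop a xs)) \<subseteq> set (take b xs)"
  proof -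
    have "set (take k (drop a xs)) \<subseteq> set (take (k + a) xs)"
      by (simp add: take_drop set_drop_subset)
    also have "\<dots> \<subseteq> set (take b xs)"
      using assms(2) by (simp add: set_take_subset_set_take)
    finally show ?thesis .
  qed
  moreover have "set (take m (drop b xs)) \<subseteq> set (drop b xs)"
    by (rule set_take_subset)
  moreover have "set (take b xs) \<inter> set (drop b xs) = {}"
    using assms(1) by (metis append_take_drop_id distinct_append)
  ultimately show ?thesis by blast
qed

lemma card_set_take_drop_inter:
  assumes "distinct xs" "a \<le> b" "a + k \<le> length xs"
  shows "a + k - b \<le> card (set (take k (drop a xs)) \<inter> set (take k (drop b xs)))"
proof -
  define T where "T = take (a + k - b) (drop b xs)"
  have "T = drop (b - a) (take k (drop a xs))"
    using assms(2) by (simp add: T_def drop_take add.commute)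
  then have "set T \<subseteq> set (take k (drop a xs))"
    by (simp add: set_drop_subset)
  moreover have "set T \<subseteq> set (take k (drop b xs))"
    unfolding T_def by (rule set_take_subset_set_take) (use assms(2) in simp)
  ultimately have "card (set T) \<le> card (set (take k (drop a xs)) \<inter> set (take k (drop b xs)))"
    by (intro card_mono) auto
  moreover have "card (set T) = a + k - b"
    using assms by (simp add: T_def distinct_card)
  ultimately show ?thesis by simp
qed

lemma path_edge_Suc_overlap:
  assumes "distinct vs" "l \<le> k" "j * (k - l) + k \<le> length vs"
  shows "l \<le> card (path_edge k l vs j \<inter> path_edge k l vs (Suc j))"
  using card_set_take_drop_inter[OF assms(1) _ assms(3), of "Suc j * (k - l)"] assms(2)
  by (simp add: path_edge_def)

lemma path_edges_disjoint:
  assumes "distinct vs" "i * (k - l) + k \<le> j * (k - l)"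
  shows "path_edge k l vs i \<inter> path_edge k l vs j = {}"
  unfolding path_edge_def using assms by (rule set_take_drop_disjoint)

lemma subset_meets_if_card_gt:
  assumes "finite g" "S \<subseteq> g" "card g < card (g \<inter> X) + card S"
  shows "S \<inter> X \<noteq> {}"
proof
  assume "S \<inter> X = {}"
  with assms(2) have "card S \<le> card (g - X)"
    using assms(1) by (intro card_mono) auto
  moreover have "card g = card (g \<inter> X) + card (g - X)"
    using assms(1) by (metis Int_Diff_Un Int_Diff_disjoint card_Un_disjoint finite_Diff finite_Int)
  ultimately show False using assms(3) by linarith
qed

lemma in_trI: "i \<in> {1..2*n} \<Longrightarrow> x \<in> f \<Longrightarrow> x \<in> U A B i \<Longrightarrow> i \<in> tr n A B f"
  unfolding tr_def by auto

lemma minidx_le: "i \<in> tr n A B g \<Longrightarrow> minidx n A B g \<le> i"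
  unfolding minidx_def by (rule Min_le) (auto simp: tr_def)

lemma minidx_in_tr:
  assumes "g \<subseteq> Vset n A B" "g \<noteq> {}"
  shows "minidx n A B g \<in> tr n A B g"
proof -
  obtain x where "x \<in> g" using assms(2) by auto
  with assms(1) obtain i where "i \<in> {1..2*n}" "x \<in> U A B i"
    unfolding Vset_def by auto
  with \<open>x \<in> g\<close> have "i \<in> tr n A B g" by (intro in_trI)
  moreover have "finite (tr n A B g)" unfolding tr_def by simp
  ultimately show ?thesis
    unfolding minidx_def by (intro Min_in) auto
qed

lemma H2_minidx_in_tr:
  assumes "g \<in> H2 k l n A B" "S \<subseteq> g" "S \<subseteq> f" "l \<le> card S" "0 < k" "1 \<le> l"
  shows "minidx n A B g \<in> tr n A B f"
proof -
  let ?X = "U A B (minidx n A B g)"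
  have g: "g \<subseteq> Vset n A B" "card g = k" "k - l + 1 \<le> card (g \<inter> ?X)"
    using assms(1) unfolding H2_def mem_Collect_eq by blast+
  then have "finite g \<and> g \<noteq> {}" using assms(5) card_gt_0_iff by metis
  then have "finite g" "g \<noteq> {}" by blast+
  have "card g < card (g \<inter> ?X) + card S"
    using g(2,3) assms(4-6) by linarith
  then obtain x where "x \<in> S" "x \<in> ?X"
    using subset_meets_if_card_gt[OF \<open>finite g\<close> assms(2)] by blast
  moreover have "minidx n A B g \<in> {1..2*n}"
    using minidx_in_tr[OF g(1) \<open>g \<noteq> {}\<close>] by (simp add: tr_def)
  ultimately show ?thesis using assms(3) in_trI[of "minidx n A B g" n x f A B] by blast
qed

lemma H2_minidx_eq_if_overlap:
  assumes "g \<in> H2 k l n A B" "g' \<in> H2 k l n A B" "l \<le> card (g \<inter> g')" "0 < k" "1 \<le> l"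
  shows "minidx n A B g = minidx n A B g'"
proof -
  have "minidx n A B g \<in> tr n A B g'"
    using assms by (intro H2_minidx_in_tr[of g k l n A B "g \<inter> g'"]) simp_all
  moreover have "minidx n A B g' \<in> tr n A B g"
    using assms by (intro H2_minidx_in_tr[of g' k l n A B "g \<inter> g'"]) simp_all
  ultimately show ?thesis by (meson minidx_le le_antisym)
qed

lemma H2_path_minidx_const:
  assumes "\<forall>i\<in>{1..s}. P i \<in> H2 k l n A B"
    and "\<forall>j. 1 \<le> j \<longrightarrow> j < s \<longrightarrow> l \<le> card (P j \<inter> P (Suc j))"
    and "0 < k" "1 \<le> l"
  shows "\<forall>i\<in>{1..s}. minidx n A B (P i) = minidx n A B (P 1)"
proof
  fix i assume "i \<in> {1..s}"
  then have "1 \<le> i" "i \<le> s" by auto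
  then show "minidx n A B (P i) = minidx n A B (P 1)"
  proof (induction i rule: dec_induct)
    case (step j)
    have "P j \<in> H2 k l n A B" "P (Suc j) \<in> H2 k l n A B" "l \<le> card (P j \<inter> P (Suc j))"
      using assms(1,2) step.hyps step.prems by simp_all
    then have "minidx n A B (P j) = minidx n A B (P (Suc j))"
      using assms(3,4) by (rule H2_minidx_eq_if_overlap)
    moreover have "minidx n A B (P j) = minidx n A B (P 1)"
      using step.IH step.prems by simp
    ultimately show ?case by linarith
  qed simp
qed

lemma H11_shared_minidx_le:
  assumes "f \<in> H11 k n G A B" "S \<subseteq> f" "S \<subseteq> g" "2 \<le> card S" "0 < k"
    and hG: "G \<subseteq> {{i, j} | i j. i \<in> {1..n} \<and> j \<in> {1..n} \<and> i \<noteq> j}"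
    and hdisj: "\<forall>i\<in>{1..n}. \<forall>j\<in>{1..n}. i \<noteq> j \<longrightarrow> A i \<inter> A j = {}"
  shows "minidx n A B g \<le> n"
proof -
  obtain i j where ij: "{i, j} \<in> G" "k div 2 \<le> card (A i \<inter> f)" "k div 2 \<le> card (A j \<inter> f)"
    and "card f = k"
    using assms(1) by (auto simp: H11_def)
  then have "finite f" using assms(5) by (auto intro: card_ge_0_finite)
  from ij(1) hG have ij_range: "i \<in> {1..n}" "j \<in> {1..n}" "i \<noteq> j"
    by (auto simp: doubleton_eq_iff)
  then have "A i \<inter> A j = {}" using hdisj by blast
  then have "card (f \<inter> (A i \<union> A j)) = card (A i \<inter> f) + card (A j \<inter> f)"
    using \<open>finite f\<close> card_Un_disjoint[of "A i \<inter> f" "A j \<inter> f"]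
    by (simp add: Int_Un_distrib Int_commute Int_left_commute)
  then obtain x where x: "x \<in> S" "x \<in> A i \<union> A j"
    using \<open>card f = k\<close> ij assms(4) subset_meets_if_card_gt[OF \<open>finite f\<close> assms(2), of "A i \<union> A j"]
    by fastforce
  have "i \<in> tr n A B g \<or> j \<in> tr n A B g"
  proof (cases "x \<in> A i")
    case True
    with x(1) assms(3) ij_range(1) show ?thesis by (auto simp: U_def intro!: in_trI[of i n x])
  next
    case False
    with x assms(3) ij_range(2) show ?thesis by (auto simp: U_def intro!: in_trI[of j n x])
  qed
  with ij_range show ?thesis by (auto dest: minidx_le)
qed

lemma H12_disjoint_edges_disjoint_tr:
  assumes "e \<in> H12 k l n A B" "e' \<in> H12 k l n A B" "e \<inter> e' = {}" "l + 2 \<le> k"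
    and hfin: "\<forall>i\<in>{n+1..2*n}. finite (A i)"
    and hA2: "\<forall>i\<in>{n+1..2*n}. card (A i) = 2 * k - 2 * l - 3"
  shows "tr n A B e \<inter> tr n A B e' = {}"
proof (rule ccontr)
  assume "tr n A B e \<inter> tr n A B e' \<noteq> {}"
  moreover obtain i i' where
    i: "i \<in> {1..n}" "tr n A B e = {i, n + i}" "card (A (n + i) \<inter> e) = k - l - 1" and
    i': "i' \<in> {1..n}" "tr n A B e' = {i', n + i'}" "card (A (n + i') \<inter> e') = k - l - 1"
    using assms(1,2) by (auto simp: H12_def)
  ultimately have "i = i'" by auto
  have fin: "finite (A (n + i))" using hfin i(1) by auto
  have "card (A (n + i) \<inter> e) + card (A (n + i) \<inter> e')
        = card (A (n + i) \<inter> e \<union> A (n + i) \<inter> e')"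
    using fin assms(3) by (intro card_Un_disjoint[symmetric]) auto
  also have "\<dots> \<le> card (A (n + i))" using fin by (intro card_mono) auto
  also have "\<dots> = 2 * k - 2 * l - 3" using hA2 i(1) by auto
  finally have "(k - l - 1) + (k - l - 1) \<le> 2 * k - 2 * l - 3"
    unfolding i(3) i'(3)[folded \<open>i = i'\<close>] .
  with assms(4) show False by presburger
qed

theorem claim3p3:
  fixes k l n s :: nat
    and G :: "nat set set"
    and A B :: "nat \<Rightarrow> 'a set"
    and vs :: "'a list"
  assumes hl: "2 \<le> l" and hlk: "2 * l < k" and hn: "1 \<le> n"
    and hG: "G \<subseteq> {{i, j} | i j. i \<in> {1..n} \<and> j \<in> {1..n} \<and> i \<noteq> j}"
    and hfin: "\<forall>i\<in>{1..2*n}. finite (A i) \<and> finite (B i)"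
    and hdisj: "\<forall>i\<in>{1..2*n}. \<forall>j\<in>{1..2*n}.
                  (i \<noteq> j \<longrightarrow> A i \<inter> A j = {} \<and> B i \<inter> B j = {}) \<and> A i \<inter> B j = {}"
    and hA1: "\<forall>i\<in>{1..n}. card (A i) = 2 * (k div 2) + l"
    and hA2: "\<forall>i\<in>{n+1..2*n}. card (A i) = 2 * k - 2 * l - 3"
    and hs: "1 \<le> s"
    and hdist: "distinct vs"
    and hlen: "length vs = k + (s + 1) * (k - l)"
    and he: "path_edge k l vs 0 \<in> H1 k l n G A B"
    and he': "path_edge k l vs (s + 1) \<in> H1 k l n G A B"
    and hmid: "\<forall>i\<in>{1..s}. path_edge k l vs i \<in> H2 k l n A B"
  shows "(\<forall>i\<in>{1..s}. minidx n A B (path_edge k l vs i) = minidx n A B (path_edge k l vs 1))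
         \<and> minidx n A B (path_edge k l vs 1)
             \<in> tr1 n A B (path_edge k l vs 0) \<inter> tr1 n A B (path_edge k l vs (s + 1))
         \<and> \<not> (path_edge k l vs 0 \<in> H12 k l n A B \<and> path_edge k l vs (s + 1) \<in> H12 k l n A B)"
proof -
  let ?P = "path_edge k l vs" and ?m = "minidx n A B (path_edge k l vs 1)"
  have overlap: "l \<le> card (?P j \<inter> ?P (Suc j))" if "j \<le> s" for j
  proof (rule path_edge_Suc_overlap[OF hdist])
    have "j * (k - l) \<le> (s + 1) * (k - l)" using that by (intro mult_le_mono1) simp
    then show "j * (k - l) + k \<le> length vs" using hlen by linarith
  qed (use hlk in simp)
  have ends_disjoint: "?P 0 \<inter> ?P (s + 1) = {}"
  proof (rule path_edges_disjoint[OF hdist])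
    have "2 * (k - l) \<le> (s + 1) * (k - l)" using hs by (intro mult_le_mono1) simp
    then show "0 * (k - l) + k \<le> (s + 1) * (k - l)" using hlk by linarith
  qed
  have k0: "0 < k" and l1: "1 \<le> l" and lk2: "l + 2 \<le> k" using hl hlk by linarith+
  have const: "\<forall>i\<in>{1..s}. minidx n A B (?P i) = ?m"
    by (rule H2_path_minidx_const[OF hmid _ k0 l1]) (simp add: overlap)
  have P1: "?P 1 \<in> H2 k l n A B" and Ps: "?P s \<in> H2 k l n A B"
    using hmid hs by simp_all
  have ov_first: "l \<le> card (?P 0 \<inter> ?P 1)" and ov_last: "l \<le> card (?P s \<inter> ?P (s + 1))"
    using overlap[of 0] overlap[of s] by simp_all
  have m_first: "?m \<in> tr n A B (?P 0)"
    by (rule H2_minidx_in_tr[OF P1 Int_lower2 Int_lower1 ov_first k0 l1])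
  have m_s: "minidx n A B (?P s) = ?m"
    using const hs by (meson atLeastAtMost_iff order_refl)
  have m_last: "?m \<in> tr n A B (?P (s + 1))"
    using H2_minidx_in_tr[OF Ps Int_lower1 Int_lower2 ov_last k0 l1] unfolding m_s .
  have not_both: "\<not> (?P 0 \<in> H12 k l n A B \<and> ?P (s + 1) \<in> H12 k l n A B)"
  proof
    assume "?P 0 \<in> H12 k l n A B \<and> ?P (s + 1) \<in> H12 k l n A B"
    moreover have "\<forall>i\<in>{n+1..2*n}. finite (A i)" using hfin by simp
    ultimately have "tr n A B (?P 0) \<inter> tr n A B (?P (s + 1)) = {}"
      using H12_disjoint_edges_disjoint_tr[OF _ _ ends_disjoint lk2 _ hA2] by blast
    then show False using m_first m_last by blast
  qed
  have disjA: "\<forall>i\<in>{1..n}. \<forall>j\<in>{1..n}. i \<noteq> j \<longrightarrow> A i \<inter> A j = {}"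
    using hdisj by simp
  have "?m \<le> n"
  proof (cases "?P 0 \<in> H11 k n G A B")
    case True
    show ?thesis
      by (rule H11_shared_minidx_le[OF True Int_lower1 Int_lower2 order_trans[OF hl ov_first] k0 hG disjA])
  next
    case False
    with he he' not_both have "?P (s + 1) \<in> H11 k n G A B" unfolding H1_def by blast
    then have "minidx n A B (?P s) \<le> n"
      using H11_shared_minidx_le[OF _ Int_lower2 Int_lower1 order_trans[OF hl ov_last] k0 hG disjA]
      by blast
    with m_s show ?thesis by simp
  qed
  with m_first m_last have "?m \<in> tr1 n A B (?P 0) \<inter> tr1 n A B (?P (s + 1))"
    unfolding tr1_def tr_def by simp
  with const not_both show ?thesis by blast
qed

end
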